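(* Let $F_2$ be the free group on $\{x,y\}$ and let $\alpha$ be a Whitehead automorphism of $F_2$ of type (W2). Then exactly one of $\alpha \equiv 1$, $\alpha \equiv (\{x\}, y)$, $\alpha \equiv (\{x\}, y^{-1})$, $\alpha \equiv (\{y\}, x)$, $\alpha \equiv (\{y\}, x^{-1})$ holds.
   Context: Let $\Sigma=\{x,y\}$. A Whitehead automorphism of type (W2) is an automorphism $(S,a)$ determined by a set $S \subset \Sigma^{\pm 1}$ and a letter $a \in \Sigma^{\pm 1}$ with $a, a^{-1} \notin S$, acting on letters $c \in \Sigma^{\pm1}$ by: $c \mapsto ca$ if $c \in S$ and $c^{-1} \notin S$; $c \mapsto a^{-1}ca$ if $c, c^{-1} \in S$; $c \mapsto c$ if $c, c^{-1} \notin S$. A cyclic word is the set of all cyclic permutations of a cyclically reduced word; an automorphism acts on cyclic words by applying it to a representative and cyclically reducing. For automorphisms $\phi,\psi$, $\phi \equiv \psi$ means $\phi(w) = \psi(w)$ for every cyclic word $w$ in $F_2$. *)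

theory Defs
  imports Main
begin

text \<open>Alphabet Sigma = {x,y}; a letter of Sigma^{+-1} is a generator with a sign
  (True = positive exponent, False = inverse).\<close>
datatype gen = X | Y

type_synonym letter = "gen \<times> bool"
type_synonym word = "letter list"

definition inv_l :: "letter \<Rightarrow> letter" where
  "inv_l c = (fst c, \<not> snd c)"

definition lx :: letter where "lx = (X, True)"
definition ly :: letter where "ly = (Y, True)"

fun red_step :: "letter \<Rightarrow> word \<Rightarrow> word" where
  "red_step c [] = [c]"
| "red_step c (d # w) = (if d = inv_l c then w else c # d # w)"

definition free_reduce :: "word \<Rightarrow> word" where
  "free_reduce w = foldr red_step w []"

definition reduced :: "word \<Rightarrow> bool" where
  "reduced w \<longleftrightarrow> (\<forall>i. Suc i < length w \<longrightarrow> w ! Suc i \<noteq> inv_l (w ! i))"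

definition cyc_reduced :: "word \<Rightarrow> bool" where
  "cyc_reduced w \<longleftrightarrow> reduced w \<and> (w = [] \<or> last w \<noteq> inv_l (hd w))"

function cyc_reduce :: "word \<Rightarrow> word" where
  "cyc_reduce w = (if 2 \<le> length w \<and> last w = inv_l (hd w)
                   then cyc_reduce (butlast (tl w)) else w)"
  by pat_completeness auto
termination by (relation "measure length") auto

definition cyc_word :: "word \<Rightarrow> word set" where
  "cyc_word w = {rotate n w | n. True}"

definition apply_hom :: "(letter \<Rightarrow> word) \<Rightarrow> word \<Rightarrow> word" where
  "apply_hom \<phi> w = concat (map \<phi> w)"

definition act_cyc :: "(letter \<Rightarrow> word) \<Rightarrow> word \<Rightarrow> word set" where
  "act_cyc \<phi> w = cyc_word (cyc_reduce (free_reduce (apply_hom \<phi> w)))"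

definition cyc_equiv :: "(letter \<Rightarrow> word) \<Rightarrow> (letter \<Rightarrow> word) \<Rightarrow> bool" where
  "cyc_equiv \<phi> \<psi> \<longleftrightarrow> (\<forall>w. cyc_reduced w \<longrightarrow> act_cyc \<phi> w = act_cyc \<psi> w)"

definition id_aut :: "letter \<Rightarrow> word" where
  "id_aut c = [c]"

text \<open>Whitehead automorphism (S,a) of type (W2), given on all letters; the case
  c not in S, c^{-1} in S is forced by the homomorphism property: c |-> a^{-1} c.\<close>
definition wh2 :: "letter set \<Rightarrow> letter \<Rightarrow> letter \<Rightarrow> word" where
  "wh2 S a c =
     (if c \<in> S \<and> inv_l c \<notin> S then [c, a]
      else if c \<in> S \<and> inv_l c \<in> S then [inv_l a, c, a]
      else if c \<notin> S \<and> inv_l c \<notin> S then [c]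
      else [inv_l a, c])"

end

theory Submission
  imports Defs
begin

text \<open>If neither a nor a\<inverse> lies in S, then S \<subseteq> {c, c\<inverse>} for the other generator c.
  The automorphism ({c, c\<inverse>}, a) is conjugation by a, and ({c\<inverse>}, a) is ({c}, a\<inverse>)
  followed by conjugation by a. Conjugation acts trivially on cyclic words, because the cyclic
  word of c w equals that of w c. This leaves the five listed representatives, which are told
  apart by their action on the cyclic words x and y.\<close>

declare cyc_reduce.simps [simp del]

lemma inv_l_inv_l [simp]: "inv_l (inv_l c) = c"
  by (simp add: inv_l_def)

lemma inv_l_neq [simp]: "inv_l c \<noteq> c" "c \<noteq> inv_l c"
  by (auto simp: inv_l_def prod_eq_iff)

lemma inv_l_eq_iff: "c = inv_l d \<longleftrightarrow> d = inv_l c"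
  by auto

lemma free_reduce_Nil [simp]: "free_reduce [] = []"
  by (simp add: free_reduce_def)

lemma free_reduce_Cons [simp]: "free_reduce (c # w) = red_step c (free_reduce w)"
  by (simp add: free_reduce_def)

lemma free_reduce_append: "free_reduce (u @ v) = foldr red_step u (free_reduce v)"
  by (simp add: free_reduce_def)

lemma reduced_Nil [simp]: "reduced []"
  and reduced_singleton [simp]: "reduced [c]"
  by (auto simp: reduced_def)

lemma reduced_Cons_Cons [simp]: "reduced (c # d # w) \<longleftrightarrow> d \<noteq> inv_l c \<and> reduced (d # w)"
proof -
  have "reduced w \<longleftrightarrow> (\<forall>i < length w - 1. w ! Suc i \<noteq> inv_l (w ! i))" for w
    unfolding reduced_def by (metis less_diff_conv Suc_eq_plus1)
  then show ?thesis by (simp add: All_less_Suc2)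
qed

lemma reduced_Cons: "reduced (c # w) \<longleftrightarrow> reduced w \<and> (w = [] \<or> hd w \<noteq> inv_l c)"
  by (cases w) auto

lemma reduced_append:
  "reduced (u @ v) \<longleftrightarrow> reduced u \<and> reduced v \<and> (u = [] \<or> v = [] \<or> hd v \<noteq> inv_l (last u))"
  by (induction u) (auto simp: reduced_Cons)

lemma red_step_no_cancel: "w = [] \<or> hd w \<noteq> inv_l c \<Longrightarrow> red_step c w = c # w"
  by (cases w) auto

lemma reduced_red_step: "reduced w \<Longrightarrow> reduced (red_step c w)"
  by (cases w) (auto simp: reduced_Cons)

lemma reduced_free_reduce [simp]: "reduced (free_reduce w)"
  by (induction w) (auto intro: reduced_red_step)

lemma free_reduce_reduced: "reduced w \<Longrightarrow> free_reduce w = w"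
  by (induction w) (auto simp: reduced_Cons red_step_no_cancel)

lemma red_step_cancel: "reduced w \<Longrightarrow> red_step c (red_step (inv_l c) w) = w"
  by (cases w) (auto simp: reduced_Cons red_step_no_cancel)

lemma free_reduce_cancel: "free_reduce (u @ c # inv_l c # v) = free_reduce (u @ v)"
  by (simp add: free_reduce_append red_step_cancel)

lemma free_reduce_append_free_reduce: "free_reduce (free_reduce u @ v) = free_reduce (u @ v)"
proof (induction u)
  case (Cons c u)
  show ?case
  proof (cases "free_reduce u")
    case (Cons d w)
    then show ?thesis
      using Cons.IH free_reduce_cancel[of "[]" c "w @ v"] by (auto simp: inv_l_eq_iff)
  qed (use Cons.IH in simp)
qed simp

lemma free_reduce_append_cong:
  assumes "free_reduce u = free_reduce u'" and "free_reduce v = free_reduce v'"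
  shows "free_reduce (u @ v) = free_reduce (u' @ v')"
  by (metis assms free_reduce_append free_reduce_append_free_reduce)

lemma free_reduce_snoc:
  assumes "reduced w"
  shows "free_reduce (w @ [c]) = (if w \<noteq> [] \<and> last w = inv_l c then butlast w else w @ [c])"
proof (cases "w \<noteq> [] \<and> last w = inv_l c")
  case True
  then obtain w' where w: "w = w' @ [inv_l c]"
    by (metis append_butlast_last_id)
  have "free_reduce (w' @ [inv_l c, c]) = w'"
    using free_reduce_cancel[of w' "inv_l c" "[]"] assms free_reduce_reduced
    by (simp add: w reduced_append)
  then show ?thesis by (simp add: w)
next
  case False
  then show ?thesis
    using assms by (auto simp: free_reduce_reduced reduced_append inv_l_eq_iff)
qed

lemma cyc_reduce_self: "w = [] \<or> last w \<noteq> inv_l (hd w) \<Longrightarrow> cyc_reduce w = w"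
  by (subst cyc_reduce.simps) auto

lemma cyc_reduce_conj [simp]: "cyc_reduce (inv_l c # w @ [c]) = cyc_reduce w"
  by (subst cyc_reduce.simps) simp

lemma cyc_word_rotate1: "cyc_word (rotate1 w) = cyc_word w"
proof (cases w)
  case (Cons c v)
  have "rotate n w = rotate (n + length v) (rotate1 w)" for n
    by (metis Cons rotate_Suc rotate1_rotate_swap add_Suc_right length_Cons rotate_conv_mod mod_add_self2)
  then show ?thesis
    unfolding cyc_word_def by (metis rotate_Suc rotate1_rotate_swap)
qed simp

lemma cyc_word_cyc_reduce_rotate:
  assumes "reduced (c # w @ [c])"
  shows "cyc_word (cyc_reduce (c # w)) = cyc_word (cyc_reduce (w @ [c]))"
proof -
  have "cyc_reduce (c # w) = c # w" "cyc_reduce (w @ [c]) = w @ [c]"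
    using assms
    by (auto intro!: cyc_reduce_self simp: reduced_Cons reduced_append inv_l_eq_iff split: if_splits)
  then show ?thesis
    using cyc_word_rotate1[of "c # w"] by simp
qed

definition cyc_class :: "word \<Rightarrow> word set" where
  "cyc_class w = cyc_word (cyc_reduce (free_reduce w))"

lemma cyc_class_cong: "free_reduce u = free_reduce v \<Longrightarrow> cyc_class u = cyc_class v"
  by (simp add: cyc_class_def)

lemma cyc_class_rotate: "cyc_class (c # w) = cyc_class (w @ [c])"
proof -
  define z where "z = free_reduce w"
  have z: "reduced z" unfolding z_def by simp
  have "free_reduce (w @ [c]) = free_reduce (z @ [c])"
    unfolding z_def by (simp add: free_reduce_append_free_reduce)
  then have rhs: "cyc_class (w @ [c]) =
      cyc_word (cyc_reduce (if z \<noteq> [] \<and> last z = inv_l c then butlast z else z @ [c]))"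
    using z by (simp add: cyc_class_def free_reduce_snoc)
  have lhs: "cyc_class (c # w) = cyc_word (cyc_reduce (red_step c z))"
    by (simp add: cyc_class_def z_def)
  consider "z = []" | d where "z = [d]" | h m e where "z = h # m @ [e]"
    by (metis append_butlast_last_id list.exhaust butlast.simps(2) last_ConsR list.discI)
  then show ?thesis
  proof cases
    case 1
    then show ?thesis by (simp add: lhs rhs)
  next
    case (2 d)
    show ?thesis
    proof (cases "d = inv_l c")
      case False
      then show ?thesis
        using cyc_word_cyc_reduce_rotate[of c "[d]"] by (simp add: lhs rhs 2 inv_l_eq_iff)
    qed (simp add: lhs rhs 2)
  next
    case (3 h m e)
    note z_eq = this
    consider "h = inv_l c" "e = inv_l c" | "h = inv_l c" "e \<noteq> inv_l c"
      | "h \<noteq> inv_l c" "e = inv_l c" | "h \<noteq> inv_l c" "e \<noteq> inv_l c"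
      by blast
    then show ?thesis
    proof cases
      case 1
      then show ?thesis
        using z cyc_word_cyc_reduce_rotate[of "inv_l c" m] by (simp add: lhs rhs z_eq)
    next
      case 2
      then show ?thesis
        using cyc_reduce_conj[of c "m @ [e]"] by (simp add: lhs rhs z_eq)
    next
      case 3
      then show ?thesis
        using cyc_reduce_conj[of "inv_l c" "h # m"] by (simp add: lhs rhs z_eq)
    next
      case 4
      have ends: "z \<noteq> []" "hd z = h" "last z = e"
        by (simp_all add: z_eq)
      with 4 z have "reduced (c # z @ [c])"
        by (simp add: reduced_Cons reduced_append inv_l_eq_iff)
      with 4 show ?thesis
        using cyc_word_cyc_reduce_rotate[of c z] by (simp add: lhs rhs z_eq)
    qed
  qed
qed

lemma act_cyc_eq_cyc_class: "act_cyc \<phi> w = cyc_class (apply_hom \<phi> w)"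
  by (simp add: act_cyc_def cyc_class_def)

lemma cyc_equiv_if_conjugate:
  assumes conj: "\<And>l. free_reduce (\<phi> l @ [inv_l a]) = free_reduce (inv_l a # \<psi> l)"
  shows "cyc_equiv \<phi> \<psi>"
proof -
  have hom: "free_reduce (apply_hom \<phi> w @ [inv_l a]) = free_reduce (inv_l a # apply_hom \<psi> w)" for w
  proof (induction w)
    case (Cons l w)
    have "free_reduce (apply_hom \<phi> (l # w) @ [inv_l a]) =
        free_reduce (\<phi> l @ apply_hom \<phi> w @ [inv_l a])"
      by (simp add: apply_hom_def)
    also have "\<dots> = free_reduce (\<phi> l @ inv_l a # apply_hom \<psi> w)"
      by (rule free_reduce_append_cong[OF refl Cons.IH])
    also have "\<dots> = free_reduce ((inv_l a # \<psi> l) @ apply_hom \<psi> w)"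
      using free_reduce_append_cong[OF conj refl] by simp
    finally show ?case by (simp add: apply_hom_def)
  qed (simp add: apply_hom_def)
  have "cyc_class (apply_hom \<phi> w) = cyc_class (apply_hom \<psi> w)" for w
  proof -
    have "cyc_class (apply_hom \<phi> w) = cyc_class ((apply_hom \<phi> w @ [inv_l a]) @ [a])"
      by (rule cyc_class_cong) (use free_reduce_cancel[of "apply_hom \<phi> w" "inv_l a" "[]"] in simp)
    also have "\<dots> = cyc_class (a # apply_hom \<phi> w @ [inv_l a])"
      by (rule cyc_class_rotate[symmetric])
    also have "\<dots> = cyc_class (a # inv_l a # apply_hom \<psi> w)"
      by (rule cyc_class_cong) (use free_reduce_append_cong[OF refl hom, of "[a]"] in simp)
    also have "\<dots> = cyc_class (apply_hom \<psi> w)"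
      by (rule cyc_class_cong) (use free_reduce_cancel[of "[]" a] in simp)
    finally show ?thesis .
  qed
  then show ?thesis
    by (simp add: cyc_equiv_def act_cyc_eq_cyc_class)
qed

lemma letter_cases:
  assumes "fst c \<noteq> fst a"
  obtains "l = a" | "l = inv_l a" | "l = c" | "l = inv_l c"
proof -
  obtain gl bl ga ba gc bc where "l = (gl, bl)" "a = (ga, ba)" "c = (gc, bc)"
    by (cases l; cases a; cases c)
  with assms that show thesis
    by (cases gl; cases ga; cases gc; cases bl; cases ba; cases bc) (auto simp: inv_l_def)
qed

lemma wh2_empty: "wh2 {} a = id_aut"
  by (rule ext) (simp add: wh2_def id_aut_def)

lemma wh2_inverse_pair_cyc_equiv_id:
  assumes "fst c \<noteq> fst a"
  shows "cyc_equiv (wh2 {c, inv_l c} a) id_aut"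
proof (rule cyc_equiv_if_conjugate[where a = a])
  fix l
  have ne: "c \<noteq> a" "c \<noteq> inv_l a" using assms by (auto simp: inv_l_def)
  show "free_reduce (wh2 {c, inv_l c} a l @ [inv_l a]) = free_reduce (inv_l a # id_aut l)"
    by (rule letter_cases[OF assms, of l]) (use ne in \<open>auto simp: wh2_def id_aut_def inv_l_eq_iff\<close>)
qed

lemma wh2_inverse_cyc_equiv:
  assumes "fst c \<noteq> fst a"
  shows "cyc_equiv (wh2 {inv_l c} a) (wh2 {c} (inv_l a))"
proof (rule cyc_equiv_if_conjugate[where a = a])
  fix l
  have ne: "c \<noteq> a" "c \<noteq> inv_l a" using assms by (auto simp: inv_l_def)
  show "free_reduce (wh2 {inv_l c} a l @ [inv_l a]) = free_reduce (inv_l a # wh2 {c} (inv_l a) l)"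
    by (rule letter_cases[OF assms, of l]) (use ne in \<open>auto simp: wh2_def inv_l_eq_iff\<close>)
qed

definition wh2_representatives :: "(letter \<Rightarrow> word) list" where
  "wh2_representatives = [id_aut, wh2 {lx} ly, wh2 {lx} (inv_l ly), wh2 {ly} lx, wh2 {ly} (inv_l lx)]"

lemma wh2_in_representatives:
  assumes "fst c \<noteq> fst a" and "snd c"
  shows "wh2 {c} a \<in> set wh2_representatives"
proof -
  obtain ga ba gc where "a = (ga, ba)" "c = (gc, True)"
    using assms(2) by (cases a; cases c) auto
  with assms(1) show ?thesis
    by (cases ga; cases gc; cases ba) (auto simp: wh2_representatives_def lx_def ly_def inv_l_def)
qed

lemma wh2_cyc_equiv_representative:
  assumes "a \<notin> S" and "inv_l a \<notin> S"
  shows "\<exists>\<phi> \<in> set wh2_representatives. cyc_equiv (wh2 S a) \<phi>"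
proof -
  obtain c where c: "fst c \<noteq> fst a" "snd c"
    by (cases "fst a") (auto intro: that[of "(X, True)"] that[of "(Y, True)"])
  have sub: "S \<subseteq> {c, inv_l c}"
  proof
    fix l assume "l \<in> S"
    with assms show "l \<in> {c, inv_l c}"
      by (cases rule: letter_cases[OF c(1), of l]) auto
  qed
  have "S = {} \<or> S = {c} \<or> S = {inv_l c} \<or> S = {c, inv_l c}"
    using sub by (cases "c \<in> S"; cases "inv_l c \<in> S") auto
  then consider "S = {}" | "S = {c}" | "S = {inv_l c}" | "S = {c, inv_l c}"
    by argo
  then show ?thesis
  proof cases
    case 1
    then show ?thesis
      by (simp add: wh2_empty wh2_representatives_def cyc_equiv_def)
  next
    case 2
    then show ?thesis
      using wh2_in_representatives[OF c] by (auto simp: cyc_equiv_def)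
  next
    case 3
    have "fst c \<noteq> fst (inv_l a)" using c by (simp add: inv_l_def)
    then show ?thesis
      using 3 wh2_inverse_cyc_equiv[OF c(1)] wh2_in_representatives[OF _ c(2)] by blast
  next
    case 4
    then show ?thesis
      using wh2_inverse_pair_cyc_equiv_id[OF c(1)] by (simp add: wh2_representatives_def)
  qed
qed

definition generator_classes :: "(letter \<Rightarrow> word) \<Rightarrow> word set \<times> word set" where
  "generator_classes \<phi> = (act_cyc \<phi> [lx], act_cyc \<phi> [ly])"

lemma cyc_equiv_generator_classes:
  "cyc_equiv \<phi> \<psi> \<Longrightarrow> generator_classes \<phi> = generator_classes \<psi>"
  by (simp add: cyc_equiv_def generator_classes_def cyc_reduced_def)

lemma cyc_word_singleton: "cyc_word [p] = {[p]}"
  by (simp add: cyc_word_def)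

lemma cyc_word_doubleton: "cyc_word [p, q] = {[p, q], [q, p]}"
proof -
  have "rotate n [p, q] = (if even n then [p, q] else [q, p])" for n
    by (induction n) auto
  then show ?thesis
    unfolding cyc_word_def by (auto intro: exI[of _ 0] exI[of _ 1])
qed

lemma distinct_generator_classes: "distinct (map generator_classes wh2_representatives)"
  by (simp add: wh2_representatives_def generator_classes_def act_cyc_def apply_hom_def wh2_def
      id_aut_def lx_def ly_def inv_l_def cyc_reduce_self cyc_word_singleton cyc_word_doubleton
      doubleton_eq_iff)

theorem lemma2p1:
  fixes S :: "letter set" and a :: letter
  assumes "a \<notin> S" and "inv_l a \<notin> S"
  shows "\<exists>!i. i < 5 \<and> cyc_equiv (wh2 S a)
           ([id_aut, wh2 {lx} ly, wh2 {lx} (inv_l ly), wh2 {ly} lx, wh2 {ly} (inv_l lx)] ! i)"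
proof -
  let ?R = wh2_representatives
  obtain i where i: "i < length ?R" "cyc_equiv (wh2 S a) (?R ! i)"
    using wh2_cyc_equiv_representative[OF assms] by (metis in_set_conv_nth)
  have unique: "j = i" if j: "j < length ?R" "cyc_equiv (wh2 S a) (?R ! j)" for j
  proof -
    have "map generator_classes ?R ! j = map generator_classes ?R ! i"
      using cyc_equiv_generator_classes[OF i(2)] cyc_equiv_generator_classes[OF j(2)] i(1) j(1)
      by simp
    then show ?thesis
      using distinct_generator_classes i(1) j(1) nth_eq_iff_index_eq by fastforce
  qed
  have "length ?R = 5"
    by (simp add: wh2_representatives_def)
  then show ?thesis
    unfolding wh2_representatives_def[symmetric] using i unique by (auto intro!: ex1I[of _ i])
qed

end
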